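(* Assume the internal updates of the sensitive attribute are completely random: $P_{trans}(a,b)=1/|\mathrm{dom}(S)|$ for all $a,b\in\mathrm{dom}(S)$, so every sensitive value can update to every value, including itself. Let $t$ be a record whose versions $t'_1,\dots,t'_I$ appear in the releases published so far, with candidate sensitive sets $C_1,\dots,C_I$. Suppose a new release is published, in any way whatsoever, in which $t$ appears with candidate sensitive set $C_{I+1}$. For $1\le i\le I$, let $r(t'_i)$ be the disclosure risk of $t'_i$ computed from the feasible sub-SUG of $t$ with layers $1,\dots,I$, and let $r^{+}(t'_i)$ be the disclosure risk of $t'_i$ computed from the feasible sub-SUG of $t$ with layers $1,\dots,I+1$. Then $r^{+}(t'_i)=r(t'_i)$ for every $1\le i\le I$.
   Context: Data model. A microdata table is published repeatedly. Its records carry an identifier, quasi-identifier (QI) attributes and a sensitive attribute $S$ with a finite domain $\mathrm{dom}(S)$. Each published (generalized) table partitions its records, possibly including counterfeit records, into QI-groups. If a record $t$ appears in a release, its candidate sensitive set in that release is the set of sensitive values occurring in its QI-group; this set contains $t$'s actual sensitive value. The versions of $t$ are its records in the successive releases in which it appears, listed in order: $t'_1,\dots,t'_I$, with candidate sensitive sets $C_1,\dots,C_I$. Internal updates are governed by a publicly known transition probability $P_{trans}(a,b)\ge 0$ for $a,b\in\mathrm{dom}(S)$. Actual updates are feasible: $P_{trans}(t'_i[S],t'_{i+1}[S])>0$ for every $i$. Sensitive attribute update graph (SUG). The SUG of $t$ has, for each $i=1,\dots,I$, a layer $V_i=\{v_{i,s}: s\in C_i\}$ with one node per value of $C_i$.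 Each node has a weight $w(v_{i,s})>0$, its linking probability, and the weights in each layer sum to $1$; under the random-world assumption $w(v_{i,s})=1/|C_i|$. There is a directed edge $(v_{i,s},v_{i+1,s'})$ exactly when $P_{trans}(s,s')>0$, and its weight is $P_{trans}(s,s')$. Feasible sub-SUG. Obtain it from the SUG by repeatedly deleting a node, together with its incident edges, until no node can be deleted. A node is deleted if any of the following holds: it lies in $V_1$ and has no outgoing edge; it lies in $V_I$ and has no incoming edge; it lies in $V_i$ with $1<i<I$ and lacks an incoming edge or lacks an outgoing edge. When $I=1$, no node is deleted. Denote the remaining layers by $V'_i$. Disclosure risk. A feasible path is a path $p=(v'_{1,x_1},\dots,v'_{I,x_I})$ through the feasible sub-SUG with one node in each layer, where consecutive nodes are joined by edges. Its weight is $w(p)=w(v'_{I,x_I})\prod_{i=1}^{I-1} w(v'_{i,x_i})\,w(v'_{i,x_i},v'_{i+1,x_{i+1}})$. The disclosure risk of version $t'_i$ is the total weight of the feasible paths passing through the node of $V'_i$ that represents $t'_i[S]$, divided by the total weight of all feasible paths. *)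

theory Defs
  imports Complex_Main "HOL-Library.FuncSet"
begin

text \<open>Sensitive attribute update graph (SUG) of a record with candidate sensitive
sets C 1, ..., C I (layers indexed 1..I).
P is the transition probability P_trans; w i s is the weight (linking probability)
of node v_{i,s}.\<close>

definition sug_nodes :: "(nat \<Rightarrow> 'a set) \<Rightarrow> nat \<Rightarrow> (nat \<times> 'a) set" where
  "sug_nodes C I = {(i, s). 1 \<le> i \<and> i \<le> I \<and> s \<in> C i}"

definition sug_edge :: "('a \<Rightarrow> 'a \<Rightarrow> real) \<Rightarrow> (nat \<times> 'a) set \<Rightarrow> nat \<times> 'a \<Rightarrow> nat \<times> 'a \<Rightarrow> bool" where
  "sug_edge P V u v \<longleftrightarrow> u \<in> V \<and> v \<in> V \<and> fst v = Suc (fst u) \<and> P (snd u) (snd v) > 0"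

definition has_in :: "('a \<Rightarrow> 'a \<Rightarrow> real) \<Rightarrow> (nat \<times> 'a) set \<Rightarrow> nat \<times> 'a \<Rightarrow> bool" where
  "has_in P V v \<longleftrightarrow> (\<exists>u. sug_edge P V u v)"

definition has_out :: "('a \<Rightarrow> 'a \<Rightarrow> real) \<Rightarrow> (nat \<times> 'a) set \<Rightarrow> nat \<times> 'a \<Rightarrow> bool" where
  "has_out P V v \<longleftrightarrow> (\<exists>u. sug_edge P V v u)"

definition deletable :: "('a \<Rightarrow> 'a \<Rightarrow> real) \<Rightarrow> nat \<Rightarrow> (nat \<times> 'a) set \<Rightarrow> nat \<times> 'a \<Rightarrow> bool" where
  "deletable P I V v \<longleftrightarrow> v \<in> V \<and> 1 < I \<and>
     ((fst v = 1 \<and> \<not> has_out P V v) \<or>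
      (fst v = I \<and> \<not> has_in P V v) \<or>
      (1 < fst v \<and> fst v < I \<and> (\<not> has_in P V v \<or> \<not> has_out P V v)))"

definition del_step :: "('a \<Rightarrow> 'a \<Rightarrow> real) \<Rightarrow> nat \<Rightarrow> (nat \<times> 'a) set \<Rightarrow> (nat \<times> 'a) set \<Rightarrow> bool" where
  "del_step P I V V' \<longleftrightarrow> (\<exists>v. deletable P I V v \<and> V' = V - {v})"

definition feasible_sub_sug :: "('a \<Rightarrow> 'a \<Rightarrow> real) \<Rightarrow> (nat \<Rightarrow> 'a set) \<Rightarrow> nat \<Rightarrow> (nat \<times> 'a) set" where
  "feasible_sub_sug P C I =
     (THE V'. (del_step P I)\<^sup>*\<^sup>* (sug_nodes C I) V' \<and> \<not> (\<exists>v. deletable P I V' v))"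

definition feasible_paths :: "('a \<Rightarrow> 'a \<Rightarrow> real) \<Rightarrow> (nat \<Rightarrow> 'a set) \<Rightarrow> nat \<Rightarrow> (nat \<Rightarrow> 'a) set" where
  "feasible_paths P C I =
     {x. x \<in> extensional {1..I} \<and>
         (\<forall>i\<in>{1..I}. (i, x i) \<in> feasible_sub_sug P C I) \<and>
         (\<forall>i. 1 \<le> i \<and> i < I \<longrightarrow>
              sug_edge P (feasible_sub_sug P C I) (i, x i) (Suc i, x (Suc i)))}"

definition path_weight :: "('a \<Rightarrow> 'a \<Rightarrow> real) \<Rightarrow> (nat \<Rightarrow> 'a \<Rightarrow> real) \<Rightarrow> nat \<Rightarrow> (nat \<Rightarrow> 'a) \<Rightarrow> real" where
  "path_weight P w I x = w I (x I) * (\<Prod>i\<in>{1..<I}. w i (x i) * P (x i) (x (Suc i)))"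

definition disclosure_risk :: "('a \<Rightarrow> 'a \<Rightarrow> real) \<Rightarrow> (nat \<Rightarrow> 'a set) \<Rightarrow> (nat \<Rightarrow> 'a \<Rightarrow> real) \<Rightarrow> nat \<Rightarrow> nat \<Rightarrow> 'a \<Rightarrow> real" where
  "disclosure_risk P C w I i s =
     (\<Sum>x\<in>{x \<in> feasible_paths P C I. x i = s}. path_weight P w I x) /
     (\<Sum>x\<in>feasible_paths P C I. path_weight P w I x)"

end

theory Submission
  imports Defs
begin

text \<open>When every transition has the same positive probability c, no node of the SUG is ever
deleted, so the feasible paths are all choices of one candidate value per layer and a path
weighs c^(I-1) times the product of its node weights. Summing over a product of layers
turns into a product of layer sums, each equal to 1, except in layer i where fixing the
value t'_i[S] leaves only its own weight. Hence the disclosure risk of t'_i is its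
linking probability, whatever the number of layers.\<close>

lemma sug_nodes_has_out:
  assumes pos: "\<forall>a\<in>D. \<forall>b\<in>D. P a b > 0"
    and layers: "\<forall>i\<in>{1..J}. C i \<subseteq> D \<and> C i \<noteq> {}"
    and v: "(i, s) \<in> sug_nodes C J" and "i < J"
  shows "has_out P (sug_nodes C J) (i, s)"
proof -
  from layers \<open>i < J\<close> obtain s' where s': "s' \<in> C (Suc i)" by fastforce
  have "s \<in> D" "s' \<in> D" using layers v s' \<open>i < J\<close> by (auto simp: sug_nodes_def)
  then have "sug_edge P (sug_nodes C J) (i, s) (Suc i, s')"
    using pos v s' \<open>i < J\<close> by (auto simp: sug_edge_def sug_nodes_def)
  then show ?thesis unfolding has_out_def by blast
qed

lemma sug_nodes_has_in:
  assumes pos: "\<forall>a\<in>D. \<forall>b\<in>D. P a b > 0"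
    and layers: "\<forall>i\<in>{1..J}. C i \<subseteq> D \<and> C i \<noteq> {}"
    and v: "(Suc i, s) \<in> sug_nodes C J" and "1 \<le> i"
  shows "has_in P (sug_nodes C J) (Suc i, s)"
proof -
  from layers v \<open>1 \<le> i\<close> obtain s' where s': "s' \<in> C i" by (fastforce simp: sug_nodes_def)
  have "s \<in> D" "s' \<in> D" using layers v s' \<open>1 \<le> i\<close> by (auto simp: sug_nodes_def)
  then have "sug_edge P (sug_nodes C J) (i, s') (Suc i, s)"
    using pos v s' \<open>1 \<le> i\<close> by (auto simp: sug_edge_def sug_nodes_def)
  then show ?thesis unfolding has_in_def by blast
qed

lemma sug_nodes_not_deletable:
  assumes pos: "\<forall>a\<in>D. \<forall>b\<in>D. P a b > 0"
    and layers: "\<forall>i\<in>{1..J}. C i \<subseteq> D \<and> C i \<noteq> {}"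
  shows "\<not> deletable P J (sug_nodes C J) v"
proof
  assume del: "deletable P J (sug_nodes C J) v"
  obtain i s where v: "v = (i, s)" by (cases v)
  have node: "(i, s) \<in> sug_nodes C J" and "1 \<le> i" "i \<le> J"
    using del v by (auto simp: deletable_def sug_nodes_def)
  have out: "has_out P (sug_nodes C J) v" if "i < J"
    using sug_nodes_has_out[OF pos layers node that] v by simp
  have "has_in P (sug_nodes C J) v" if "1 < i"
  proof -
    obtain j where "i = Suc j" "1 \<le> j" using \<open>1 < i\<close> by (cases i) auto
    then show ?thesis using sug_nodes_has_in[OF pos layers] node v by simp
  qed
  with out del v \<open>1 \<le> i\<close> \<open>i \<le> J\<close> show False by (auto simp: deletable_def)
qed

lemma feasible_sub_sug_eq_sug_nodes:
  assumes pos: "\<forall>a\<in>D. \<forall>b\<in>D. P a b > 0"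
    and layers: "\<forall>i\<in>{1..J}. C i \<subseteq> D \<and> C i \<noteq> {}"
  shows "feasible_sub_sug P C J = sug_nodes C J"
proof -
  note stuck = sug_nodes_not_deletable[OF pos layers]
  have "V = sug_nodes C J" if "(del_step P J)\<^sup>*\<^sup>* (sug_nodes C J) V" for V
    using that by induction (use stuck in \<open>auto simp: del_step_def\<close>)
  then show ?thesis
    unfolding feasible_sub_sug_def by (intro the_equality) (use stuck in auto)
qed

lemma feasible_paths_eq_PiE:
  assumes pos: "\<forall>a\<in>D. \<forall>b\<in>D. P a b > 0"
    and layers: "\<forall>i\<in>{1..J}. C i \<subseteq> D \<and> C i \<noteq> {}"
  shows "feasible_paths P C J = PiE {1..J} C"
proof (intro set_eqI iffI)
  fix x assume "x \<in> feasible_paths P C J"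
  then show "x \<in> PiE {1..J} C"
    by (auto simp: feasible_paths_def feasible_sub_sug_eq_sug_nodes[OF pos layers]
        sug_nodes_def PiE_def)
next
  fix x assume x: "x \<in> PiE {1..J} C"
  have "sug_edge P (sug_nodes C J) (i, x i) (Suc i, x (Suc i))" if "1 \<le> i" "i < J" for i
  proof -
    have "x i \<in> C i" "x (Suc i) \<in> C (Suc i)" using x that by auto
    moreover from this have "x i \<in> D" "x (Suc i) \<in> D" using layers that by auto
    ultimately show ?thesis using pos that by (auto simp: sug_edge_def sug_nodes_def)
  qed
  then show "x \<in> feasible_paths P C J"
    using x by (auto simp: feasible_paths_def feasible_sub_sug_eq_sug_nodes[OF pos layers]
        sug_nodes_def PiE_def)
qed

lemma path_weight_const_trans:
  assumes const: "\<forall>a\<in>D. \<forall>b\<in>D. P a b = c"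
    and "1 \<le> J" and path: "\<forall>i\<in>{1..J}. x i \<in> D"
  shows "path_weight P w J x = c ^ (J - 1) * (\<Prod>i\<in>{1..J}. w i (x i))"
proof -
  have "(\<Prod>i\<in>{1..<J}. w i (x i) * P (x i) (x (Suc i))) = (\<Prod>i\<in>{1..<J}. w i (x i) * c)"
    using const path by (intro prod.cong) auto
  also have "\<dots> = (\<Prod>i\<in>{1..<J}. w i (x i)) * c ^ (J - 1)"
    by (simp add: prod.distrib)
  finally have "path_weight P w J x = w J (x J) * ((\<Prod>i\<in>{1..<J}. w i (x i)) * c ^ (J - 1))"
    unfolding path_weight_def by simp
  moreover have "{1..J} = insert J {1..<J}" using \<open>1 \<le> J\<close> by auto
  ultimately show ?thesis by simp
qed

lemma sum_path_weight_PiE_const_trans: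
  assumes const: "\<forall>a\<in>D. \<forall>b\<in>D. P a b = c"
    and "finite D" and "1 \<le> J" and layers: "\<forall>i\<in>{1..J}. A i \<subseteq> D"
  shows "(\<Sum>x\<in>PiE {1..J} A. path_weight P w J x)
    = c ^ (J - 1) * (\<Prod>i\<in>{1..J}. \<Sum>s\<in>A i. w i s)"
proof -
  have "(\<Sum>x\<in>PiE {1..J} A. path_weight P w J x)
      = (\<Sum>x\<in>PiE {1..J} A. c ^ (J - 1) * (\<Prod>i\<in>{1..J}. w i (x i)))"
    using layers by (intro sum.cong refl path_weight_const_trans[OF const \<open>1 \<le> J\<close>]) blast
  also have "\<dots> = c ^ (J - 1) * (\<Sum>x\<in>PiE {1..J} A. \<Prod>i\<in>{1..J}. w i (x i))"
    by (simp add: sum_distrib_left)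
  also have "(\<Sum>x\<in>PiE {1..J} A. \<Prod>i\<in>{1..J}. w i (x i)) = (\<Prod>i\<in>{1..J}. \<Sum>s\<in>A i. w i s)"
  proof (rule prod_sum_PiE[symmetric])
    show "finite (A i)" if "i \<in> {1..J}" for i
      using layers that \<open>finite D\<close> finite_subset by blast
  qed simp
  finally show ?thesis .
qed

lemma disclosure_risk_const_trans:
  assumes "finite D" and const: "\<forall>a\<in>D. \<forall>b\<in>D. P a b = c" and "c > 0"
    and layers: "\<forall>i\<in>{1..J}. C i \<subseteq> D \<and> C i \<noteq> {}"
    and normalized: "\<forall>i\<in>{1..J}. (\<Sum>s\<in>C i. w i s) = 1"
    and "1 \<le> J" and k: "k \<in> {1..J}" and "s \<in> C k"
  shows "disclosure_risk P C w J k s = w k s"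
proof -
  have pos: "\<forall>a\<in>D. \<forall>b\<in>D. P a b > 0" using const \<open>c > 0\<close> by simp
  note sum_weights = sum_path_weight_PiE_const_trans[OF const \<open>finite D\<close> \<open>1 \<le> J\<close>]
  define A where "A = C(k := {s})"
  have paths_through: "{x \<in> PiE {1..J} C. x k = s} = PiE {1..J} A"
    using k \<open>s \<in> C k\<close> by (intro set_eqI) (auto simp: A_def PiE_iff split: if_splits)
  have A_layers: "\<forall>i\<in>{1..J}. A i \<subseteq> D" using layers \<open>s \<in> C k\<close> by (auto simp: A_def)
  have numerator: "(\<Sum>x\<in>{x \<in> feasible_paths P C J. x k = s}. path_weight P w J x)
      = c ^ (J - 1) * (\<Prod>i\<in>{1..J}. \<Sum>s\<in>A i. w i s)"
    unfolding feasible_paths_eq_PiE[OF pos layers] paths_through by (rule sum_weights[OF A_layers])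
  have "(\<Prod>i\<in>{1..J}. \<Sum>s\<in>A i. w i s) = (\<Prod>i\<in>{1..J}. if i = k then w k s else 1)"
    using normalized by (intro prod.cong) (auto simp: A_def)
  also have "\<dots> = w k s" using k by (simp add: prod.delta)
  finally have "(\<Prod>i\<in>{1..J}. \<Sum>s\<in>A i. w i s) = w k s" .
  moreover have "(\<Sum>x\<in>feasible_paths P C J. path_weight P w J x) = c ^ (J - 1)"
    using layers normalized
    unfolding feasible_paths_eq_PiE[OF pos layers] by (subst sum_weights) auto
  ultimately show ?thesis
    using \<open>c > 0\<close> by (simp add: disclosure_risk_def numerator)
qed

theorem lemma1:
  fixes D :: "'a set" and P :: "'a \<Rightarrow> 'a \<Rightarrow> real"
    and C :: "nat \<Rightarrow> 'a set" and w :: "nat \<Rightarrow> 'a \<Rightarrow> real"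
    and x :: "nat \<Rightarrow> 'a" and I :: nat
  assumes "finite D" and "D \<noteq> {}"
    and "\<forall>a\<in>D. \<forall>b\<in>D. P a b = 1 / real (card D)"
    and "1 \<le> I"
    and "\<forall>i\<in>{1..Suc I}. C i \<subseteq> D \<and> x i \<in> C i"
    and "\<forall>i\<in>{1..Suc I}. (\<forall>s\<in>C i. w i s > 0) \<and> (\<Sum>s\<in>C i. w i s) = 1"
    and "\<forall>i. 1 \<le> i \<and> i < Suc I \<longrightarrow> P (x i) (x (Suc i)) > 0"
  shows "\<forall>i\<in>{1..I}. disclosure_risk P C w (Suc I) i (x i) = disclosure_risk P C w I i (x i)"
proof
  fix i assume i: "i \<in> {1..I}"
  have c: "1 / real (card D) > 0" using assms(1,2) by (simp add: card_gt_0_iff)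
  have layers: "\<forall>j\<in>{1..J}. C j \<subseteq> D \<and> C j \<noteq> {}"
    and normalized: "\<forall>j\<in>{1..J}. (\<Sum>s\<in>C j. w j s) = 1" if "J \<le> Suc I" for J
    using assms(5,6) that by fastforce+
  have "disclosure_risk P C w J i (x i) = w i (x i)" if "J \<in> {I, Suc I}" for J
    using that i assms(4,5)
    by (intro disclosure_risk_const_trans[OF assms(1,3) c layers normalized]) auto
  then show "disclosure_risk P C w (Suc I) i (x i) = disclosure_risk P C w I i (x i)" by simp
qed

end
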